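(* Let $G$ be a $c$-almost-complete graph on $n$ vertices. Then for every integer $m$ with $m\ge3$ and $2c+2\le m\le n$, $G$ contains a cycle of length exactly $m$.
   Context: A graph on $n$ vertices is $c$-almost-complete if its minimum degree is at least $(n-1)-c$. *)

theory Defs
  imports Main
begin

definition simple_graph :: "'a set \<Rightarrow> ('a \<Rightarrow> 'a \<Rightarrow> bool) \<Rightarrow> bool" where
  "simple_graph V E \<longleftrightarrow> finite V \<and> (\<forall>x y. E x y \<longrightarrow> x \<in> V \<and> y \<in> V)
     \<and> (\<forall>x y. E x y \<longrightarrow> E y x) \<and> (\<forall>x. \<not> E x x)"

definition degree :: "'a set \<Rightarrow> ('a \<Rightarrow> 'a \<Rightarrow> bool) \<Rightarrow> 'a \<Rightarrow> nat" where
  "degree V E v = card {u \<in> V. E v u}"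

definition almost_complete :: "nat \<Rightarrow> 'a set \<Rightarrow> ('a \<Rightarrow> 'a \<Rightarrow> bool) \<Rightarrow> bool" where
  "almost_complete c V E \<longleftrightarrow>
     (\<forall>v\<in>V. int (degree V E v) \<ge> (int (card V) - 1) - int c)"

definition has_cycle_of_length :: "'a set \<Rightarrow> ('a \<Rightarrow> 'a \<Rightarrow> bool) \<Rightarrow> nat \<Rightarrow> bool" where
  "has_cycle_of_length V E m \<longleftrightarrow> 3 \<le> m \<and>
     (\<exists>vs. length vs = m \<and> distinct vs \<and> set vs \<subseteq> V \<and>
        (\<forall>i<m. E (vs ! i) (vs ! ((i + 1) mod m))))"

end

theory Submission
  imports Defs
begin

text \<open>Any \<open>m\<close> vertices of the graph induce a subgraph in which every vertex has lost at most
  \<open>n - m\<close> neighbours, so its minimum degree is at least \<open>m - 1 - c \<ge> m / 2\<close>. By Dirac's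
  theorem this subgraph has a Hamiltonian cycle, which is a cycle of length \<open>m\<close> in the graph.\<close>

definition cyclic_walk :: "('a \<Rightarrow> 'a \<Rightarrow> bool) \<Rightarrow> 'a list \<Rightarrow> bool" where
  "cyclic_walk E xs \<longleftrightarrow> xs \<noteq> [] \<and> successively E xs \<and> E (last xs) (hd xs)"

definition path_in :: "'a set \<Rightarrow> ('a \<Rightarrow> 'a \<Rightarrow> bool) \<Rightarrow> 'a list \<Rightarrow> bool" where
  "path_in S E xs \<longleftrightarrow> distinct xs \<and> set xs \<subseteq> S \<and> successively E xs"

lemma cyclic_walk_rotate1:
  assumes "cyclic_walk E xs"
  shows "cyclic_walk E (rotate1 xs)"
proof -
  obtain x ys where xs: "xs = x # ys"
    using assms unfolding cyclic_walk_def by (cases xs) auto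
  show ?thesis
  proof (cases "ys = []")
    case False
    then show ?thesis
      using assms unfolding xs cyclic_walk_def by (auto simp: successively_Cons successively_append_iff)
  qed (use assms xs in simp)
qed

lemma cyclic_walk_rotate: "cyclic_walk E xs \<Longrightarrow> cyclic_walk E (rotate n xs)"
  by (induction n) (auto simp: cyclic_walk_rotate1)

lemma cyclic_walk_reverse_suffix:
  assumes "symp E" and walk: "successively E xs" and i: "Suc i < length xs"
    and chord_hd: "E (hd xs) (xs ! Suc i)" and chord_last: "E (xs ! i) (last xs)"
  shows "cyclic_walk E (take (Suc i) xs @ rev (drop (Suc i) xs))"
proof -
  have prefix: "successively E (take (Suc i) xs)" and rest: "successively E (drop (Suc i) xs)"
    using walk successively_append_iff[of E "take (Suc i) xs" "drop (Suc i) xs"] by simp_all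
  have "successively (\<lambda>x y. E y x) (drop (Suc i) xs)"
    using rest by (rule successively_mono) (erule sympD[OF \<open>symp E\<close>])
  then have suffix: "successively E (rev (drop (Suc i) xs))" by simp
  have "last (take (Suc i) xs) = xs ! i"
    using i by (simp add: take_Suc_conv_app_nth)
  moreover have "hd (rev (drop (Suc i) xs)) = last xs"
    using i by (simp add: hd_rev last_drop)
  moreover have "last (rev (drop (Suc i) xs)) = xs ! Suc i"
    using i by (simp add: last_rev hd_drop_conv_nth)
  moreover have "hd (take (Suc i) xs @ rev (drop (Suc i) xs)) = hd xs"
    using i by (cases xs) auto
  moreover have "E (xs ! Suc i) (hd xs)" using sympD[OF \<open>symp E\<close> chord_hd] .
  ultimately show ?thesis
    using i prefix suffix chord_last unfolding cyclic_walk_def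
    by (auto simp: successively_append_iff)
qed

text \<open>Pigeonhole on the positions of the path: the successors of the neighbours of the first
  vertex and the neighbours of the last vertex cannot avoid each other.\<close>

lemma crossing_chords_exist:
  assumes "symp E" "irreflp E" "xs \<noteq> []"
    and deg: "length xs \<le> card {u \<in> set xs. E (hd xs) u} + card {u \<in> set xs. E (last xs) u}"
  shows "\<exists>i. Suc i < length xs \<and> E (hd xs) (xs ! Suc i) \<and> E (xs ! i) (last xs)"
proof (rule ccontr)
  assume no_crossing: "\<not> ?thesis"
  define k where "k = length xs - 1"
  have hd_nth: "hd xs = xs ! 0" and last_nth: "last xs = xs ! k"
    using \<open>xs \<noteq> []\<close> by (auto simp: hd_conv_nth last_conv_nth k_def)
  define A where "A = {i. i < k \<and> E (hd xs) (xs ! Suc i)}"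
  define B where "B = {i. i < k \<and> E (xs ! i) (last xs)}"
  have "{u \<in> set xs. E (hd xs) u} \<subseteq> (\<lambda>i. xs ! Suc i) ` A"
  proof
    fix u assume u: "u \<in> {u \<in> set xs. E (hd xs) u}"
    then obtain j where j: "j < length xs" "u = xs ! j" by (auto simp: in_set_conv_nth)
    with u \<open>irreflp E\<close> hd_nth have "j \<noteq> 0" by (metis irreflp_def mem_Collect_eq)
    then obtain i where "j = Suc i" using not0_implies_Suc by blast
    with j u show "u \<in> (\<lambda>i. xs ! Suc i) ` A" unfolding A_def k_def by auto
  qed
  then have card_A: "card {u \<in> set xs. E (hd xs) u} \<le> card A"
    by (rule surj_card_le[rotated]) (simp add: A_def)
  have "{u \<in> set xs. E (last xs) u} \<subseteq> (!) xs ` B"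
  proof
    fix u assume u: "u \<in> {u \<in> set xs. E (last xs) u}"
    then obtain j where j: "j < length xs" "u = xs ! j" by (auto simp: in_set_conv_nth)
    with u \<open>irreflp E\<close> last_nth have "j \<noteq> k" by (metis irreflp_def mem_Collect_eq)
    moreover have "E u (last xs)" using u sympD[OF \<open>symp E\<close>] by blast
    ultimately show "u \<in> (!) xs ` B" using j unfolding B_def k_def by auto
  qed
  then have card_B: "card {u \<in> set xs. E (last xs) u} \<le> card B"
    by (rule surj_card_le[rotated]) (simp add: B_def)
  have "A \<inter> B = {}" using no_crossing unfolding A_def B_def k_def by auto
  then have "card A + card B = card (A \<union> B)"
    by (simp add: card_Un_disjoint A_def B_def)
  also have "\<dots> \<le> k" using card_mono[of "{..<k}" "A \<union> B"] by (auto simp: A_def B_def)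
  moreover have "0 < length xs" using \<open>xs \<noteq> []\<close> by simp
  ultimately show False using deg card_A card_B unfolding k_def by linarith
qed

lemma cyclic_walk_extend:
  assumes "cyclic_walk E ys" "u \<in> set ys" "E w u"
  shows "\<exists>j. successively E (w # rotate j ys)"
proof -
  obtain j where "j < length ys" "u = ys ! j" using assms(2) by (auto simp: in_set_conv_nth)
  moreover have "ys \<noteq> []" using assms(1) by (simp add: cyclic_walk_def)
  ultimately have "hd (rotate j ys) = u" by (simp add: hd_rotate_conv_nth)
  moreover have "cyclic_walk E (rotate j ys)" using assms(1) by (rule cyclic_walk_rotate)
  ultimately show ?thesis using assms(3) by (auto simp: cyclic_walk_def successively_Cons)
qed

lemma longest_path_exists:
  assumes "finite S" "v \<in> S"
  obtains xs where "path_in S E xs" "xs \<noteq> []" "\<And>ys. path_in S E ys \<Longrightarrow> length ys \<le> length xs"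
proof -
  have "length ys < Suc (card S)" if "path_in S E ys" for ys
    using that card_mono[OF \<open>finite S\<close>] distinct_card[of ys]
    unfolding path_in_def by (metis le_imp_less_Suc)
  moreover have single: "path_in S E [v]" using \<open>v \<in> S\<close> by (simp add: path_in_def)
  ultimately obtain xs where "path_in S E xs" "\<And>ys. path_in S E ys \<Longrightarrow> length ys \<le> length xs"
    using ex_has_greatest_nat[of "path_in S E" "[v]" length "Suc (card S)"] by blast
  moreover from this(2)[OF single] have "xs \<noteq> []" by auto
  ultimately show ?thesis using that by blast
qed

lemma longest_path_neighbours:
  assumes "symp E" and path: "path_in S E xs" "xs \<noteq> []"
    and longest: "\<And>ys. path_in S E ys \<Longrightarrow> length ys \<le> length xs"
  shows "{u \<in> S. E (hd xs) u} = {u \<in> set xs. E (hd xs) u}"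
    and "{u \<in> S. E (last xs) u} = {u \<in> set xs. E (last xs) u}"
proof -
  have "u \<in> set xs" if "u \<in> S" "E (hd xs) u" for u
  proof (rule ccontr)
    assume "u \<notin> set xs"
    moreover have "E u (hd xs)" using sympD[OF \<open>symp E\<close> that(2)] .
    ultimately have "path_in S E (u # xs)"
      using path that by (auto simp: path_in_def successively_Cons)
    then show False using longest by fastforce
  qed
  then show "{u \<in> S. E (hd xs) u} = {u \<in> set xs. E (hd xs) u}"
    using path by (auto simp: path_in_def)
  have "u \<in> set xs" if "u \<in> S" "E (last xs) u" for u
  proof (rule ccontr)
    assume "u \<notin> set xs"
    with path that have "path_in S E (xs @ [u])"
      by (auto simp: path_in_def successively_append_iff)
    then show False using longest by fastforce
  qed
  then show "{u \<in> S. E (last xs) u} = {u \<in> set xs. E (last xs) u}"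
    using path by (auto simp: path_in_def)
qed

lemma longest_path_closes:
  assumes "symp E" "irreflp E" and path: "path_in S E xs" "xs \<noteq> []"
    and longest: "\<And>ys. path_in S E ys \<Longrightarrow> length ys \<le> length xs"
    and ore: "length xs \<le> card {u \<in> S. E (hd xs) u} + card {u \<in> S. E (last xs) u}"
  shows "\<exists>ys. cyclic_walk E ys \<and> distinct ys \<and> set ys = set xs"
proof -
  note ends = longest_path_neighbours[OF \<open>symp E\<close> path longest]
  have "length xs \<le> card {u \<in> set xs. E (hd xs) u} + card {u \<in> set xs. E (last xs) u}"
    using ore ends by (simp only:)
  then obtain i where i: "Suc i < length xs" "E (hd xs) (xs ! Suc i)" "E (xs ! i) (last xs)"
    using crossing_chords_exist[OF \<open>symp E\<close> \<open>irreflp E\<close> \<open>xs \<noteq> []\<close>] by blast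
  define ys where "ys = take (Suc i) xs @ rev (drop (Suc i) xs)"
  have "cyclic_walk E ys"
    unfolding ys_def using cyclic_walk_reverse_suffix[OF \<open>symp E\<close> _ i] path
    by (simp add: path_in_def)
  moreover have "distinct (take (Suc i) xs @ drop (Suc i) xs)" using path by (simp add: path_in_def)
  then have "distinct ys" unfolding ys_def distinct_append by simp
  moreover have "set ys = set xs"
    unfolding ys_def by (metis set_append set_rev append_take_drop_id)
  ultimately show ?thesis by blast
qed

lemma long_path_dominates:
  assumes "finite S" "irreflp E" "3 \<le> card S" and path: "path_in S E xs"
    and long: "card S \<le> 2 * (length xs - 1)"
    and w: "w \<in> S" "w \<notin> set xs" and deg_w: "card S \<le> 2 * card {u \<in> S. E w u}"
  shows "\<exists>u \<in> set xs. E w u"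
proof (rule ccontr)
  assume "\<not> (\<exists>u \<in> set xs. E w u)"
  then have "{u \<in> S. E w u} \<subseteq> S - insert w (set xs)"
    using \<open>irreflp E\<close> by (auto simp: irreflp_def)
  moreover have "card (S - insert w (set xs)) = card S - Suc (length xs)"
    using w path \<open>finite S\<close> by (simp add: card_Diff_subset path_in_def distinct_card)
  ultimately have "card {u \<in> S. E w u} \<le> card S - Suc (length xs)"
    by (metis card_mono finite_Diff \<open>finite S\<close>)
  then show False using deg_w long \<open>3 \<le> card S\<close> by linarith
qed

text \<open>A longest path closes up to a cycle on its own vertices, and each end has at least
  \<open>card S / 2\<close> neighbours on it; so every outside vertex, having at least \<open>card S / 2\<close>
  neighbours but fewer than that many outside the path, sees the cycle and extends it to a
  longer path.\<close>

theorem dirac_hamiltonian_cycle: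
  assumes "finite S" "3 \<le> card S" "symp E" "irreflp E"
    and deg: "\<forall>v\<in>S. card S \<le> 2 * card {u \<in> S. E v u}"
  shows "\<exists>vs. distinct vs \<and> set vs = S \<and> cyclic_walk E vs"
proof -
  obtain v where "v \<in> S" using assms(2) by fastforce
  then obtain xs where path: "path_in S E xs" "xs \<noteq> []"
    and longest: "\<And>ys. path_in S E ys \<Longrightarrow> length ys \<le> length xs"
    using longest_path_exists[OF \<open>finite S\<close>] by metis
  have hd_S: "hd xs \<in> S" and last_S: "last xs \<in> S"
    using path by (auto simp: path_in_def)
  have "length xs \<le> card S"
    using path card_mono[OF \<open>finite S\<close>] by (metis distinct_card path_in_def)
  with bspec[OF deg hd_S] bspec[OF deg last_S]
  have "length xs \<le> card {u \<in> S. E (hd xs) u} + card {u \<in> S. E (last xs) u}" by linarith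
  then obtain ys where cycle: "cyclic_walk E ys" "distinct ys" "set ys = set xs"
    using longest_path_closes[OF \<open>symp E\<close> \<open>irreflp E\<close> path] longest by blast
  have "{u \<in> S. E (hd xs) u} \<subseteq> set xs - {hd xs}"
    using longest_path_neighbours(1)[OF \<open>symp E\<close> path longest] \<open>irreflp E\<close>
    by (auto simp: irreflp_def)
  then have "card {u \<in> S. E (hd xs) u} \<le> card (set xs - {hd xs})"
    by (intro card_mono) auto
  also have "\<dots> = length xs - 1"
    using path by (simp add: path_in_def distinct_card)
  finally have hd_degree: "card S \<le> 2 * (length xs - 1)" using deg hd_S by fastforce
  have "set xs = S"
  proof (rule ccontr)
    assume "set xs \<noteq> S"
    then obtain w where w: "w \<in> S" "w \<notin> set xs" using path by (auto simp: path_in_def)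
    then have "\<exists>u \<in> set ys. E w u"
      using long_path_dominates[OF \<open>finite S\<close> \<open>irreflp E\<close> \<open>3 \<le> card S\<close> path(1) hd_degree w]
        bspec[OF deg w(1)] cycle(3) by blast
    then obtain j where "successively E (w # rotate j ys)"
      using cyclic_walk_extend[OF cycle(1)] by blast
    then have "path_in S E (w # rotate j ys)"
      using w cycle path by (simp add: path_in_def)
    moreover have "length ys = length xs"
      using cycle path by (metis distinct_card path_in_def)
    ultimately show False using longest by fastforce
  qed
  then show ?thesis using cycle by blast
qed

lemma has_cycle_of_length_if_cyclic_walk:
  assumes "3 \<le> length vs" "distinct vs" "set vs \<subseteq> V" "cyclic_walk E vs"
  shows "has_cycle_of_length V E (length vs)"
  unfolding has_cycle_of_length_def
proof (intro conjI exI[of _ vs] allI impI)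
  fix i assume i: "i < length vs"
  show "E (vs ! i) (vs ! ((i + 1) mod length vs))"
  proof (cases "Suc i < length vs")
    case True
    then show ?thesis using assms(4) by (simp add: cyclic_walk_def successively_nth)
  next
    case False
    then have "Suc i = length vs" using i by simp
    then have "i = length vs - 1" "(i + 1) mod length vs = 0" by auto
    moreover have "vs \<noteq> []" using i by auto
    then have "last vs = vs ! (length vs - 1)" "hd vs = vs ! 0"
      by (simp_all add: last_conv_nth hd_conv_nth)
    ultimately show ?thesis using assms(4) by (simp add: cyclic_walk_def)
  qed
qed (use assms in auto)

lemma almost_complete_induced_dirac:
  assumes "simple_graph V E" "almost_complete c V E" "T \<subseteq> V" "2 * c + 2 \<le> card T"
  shows "\<forall>v\<in>T. card T \<le> 2 * card {u \<in> T. E v u}"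
proof
  fix v assume v: "v \<in> T"
  have "finite V" using assms(1) by (simp add: simple_graph_def)
  then have finite_T: "finite T" using assms(3) finite_subset by blast
  have "{u \<in> V. E v u} \<subseteq> {u \<in> T. E v u} \<union> (V - T)" by auto
  then have "card {u \<in> V. E v u} \<le> card ({u \<in> T. E v u} \<union> (V - T))"
    using \<open>finite V\<close> finite_T by (intro card_mono) auto
  also have "\<dots> \<le> card {u \<in> T. E v u} + card (V - T)" by (rule card_Un_le)
  also have "card (V - T) = card V - card T"
    using card_Diff_subset[OF finite_T assms(3)] .
  finally have "card {u \<in> V. E v u} \<le> card {u \<in> T. E v u} + (card V - card T)" .
  moreover have "int (card {u \<in> V. E v u}) \<ge> int (card V) - 1 - int c"
    using assms(2,3) v unfolding almost_complete_def degree_def by auto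
  moreover have "card T \<le> card V" using card_mono[OF \<open>finite V\<close> assms(3)] .
  ultimately show "card T \<le> 2 * card {u \<in> T. E v u}" using assms(4) by linarith
qed

theorem corollary7p2:
  fixes V :: "'a set" and E :: "'a \<Rightarrow> 'a \<Rightarrow> bool" and c n m :: nat
  assumes "simple_graph V E"
    and "card V = n"
    and "almost_complete c V E"
    and "m \<ge> 3" and "2 * c + 2 \<le> m" and "m \<le> n"
  shows "has_cycle_of_length V E m"
proof -
  have "symp E" "irreflp E"
    using assms(1) unfolding simple_graph_def symp_def irreflp_def by auto
  obtain T where T: "T \<subseteq> V" "card T = m" "finite T"
    using obtain_subset_with_card_n[of m V] assms(2,6) by auto
  have "\<forall>v\<in>T. card T \<le> 2 * card {u \<in> T. E v u}"
    using almost_complete_induced_dirac[OF assms(1,3) T(1)] T(2) assms(5) by simp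
  then obtain vs where "distinct vs" "set vs = T" "cyclic_walk E vs"
    using dirac_hamiltonian_cycle[OF T(3) _ \<open>symp E\<close> \<open>irreflp E\<close>] T(2) assms(4) by auto
  moreover have "length vs = m" using calculation T(2) by (metis distinct_card)
  ultimately show ?thesis
    using has_cycle_of_length_if_cyclic_walk[of vs V E] T(1) assms(4) by simp
qed

end
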